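(* If $g$ is an inner function and $f \in (H^2)^*$, then for each $n \in \mathbb{N}$, $$Q_n\bigl(1/(fg)\bigr) = \overline{g(0)}\, Q_n(1/f).$$
   Context: $H^2$ is the Hardy space on the unit disc $\mathbb{D}$ with norm $\|\sum_k a_kz^k\|_{H^2}^2=\sum_k|a_k|^2$, and $(H^2)^*=H^2\setminus\{0\}$. An inner function is a bounded holomorphic function on $\mathbb{D}$ whose radial boundary values have modulus $1$ almost everywhere on $\mathbb{T}$. For $F\in (H^2)^*$, $Q_n(1/F)$ is the unique polynomial of degree at most $n$ minimizing $\|qF-1\|_{H^2}$ over polynomials $q$ of degree at most $n$. *)

theory Defs
  imports "HOL-Complex_Analysis.Complex_Analysis" "HOL-Computational_Algebra.Polynomial"
begin

definition taylor_coeff :: "(complex \<Rightarrow> complex) \<Rightarrow> nat \<Rightarrow> complex" where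
  "taylor_coeff f k = (deriv ^^ k) f 0 / of_nat (fact k)"

definition H2 :: "(complex \<Rightarrow> complex) set" where
  "H2 = {f. f holomorphic_on ball 0 1 \<and> summable (\<lambda>k. (norm (taylor_coeff f k))^2)}"

text \<open>(H^2)^* = H^2 without the zero function (as a function on the disc).\<close>
definition H2_star :: "(complex \<Rightarrow> complex) set" where
  "H2_star = {f \<in> H2. \<exists>z\<in>ball 0 1. f z \<noteq> 0}"

definition H2_norm :: "(complex \<Rightarrow> complex) \<Rightarrow> real" where
  "H2_norm f = sqrt (\<Sum>k. (norm (taylor_coeff f k))^2)"

definition inner_function :: "(complex \<Rightarrow> complex) \<Rightarrow> bool" where
  "inner_function g \<longleftrightarrow> g holomorphic_on ball 0 1 \<and> bounded (g ` ball 0 1) \<and>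
     (AE \<theta> in lborel. \<theta> \<in> {0..2*pi} \<longrightarrow>
        (\<exists>L. ((\<lambda>r. g (complex_of_real r * cis \<theta>)) \<longlongrightarrow> L) (at_left 1) \<and> norm L = 1))"

definition is_Qn :: "nat \<Rightarrow> (complex \<Rightarrow> complex) \<Rightarrow> complex poly \<Rightarrow> bool" where
  "is_Qn n F q \<longleftrightarrow> degree q \<le> n \<and>
     (\<forall>p. degree p \<le> n \<longrightarrow>
        H2_norm (\<lambda>z. poly q z * F z - 1) \<le> H2_norm (\<lambda>z. poly p z * F z - 1))"

text \<open>Q_n(1/F): the (unique) minimizer.\<close>
definition Qn :: "nat \<Rightarrow> (complex \<Rightarrow> complex) \<Rightarrow> complex poly" where
  "Qn n F = (THE q. is_Qn n F q)"

end

theory Submission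
  imports Defs
begin

text \<open>
  Multiplication by an inner function g is an isometry of H^2. For polynomials p this is
  Parseval's identity on the circles of radius r < 1 together with |g| = 1 a.e. on the
  boundary (bounded convergence as r tends to 1); it extends to all of H^2 by density.
  Put c = cnj (g 0). Then q f g - 1 = g (q f - c) + (c g - 1), and the two summands are
  orthogonal: by the isometry, <g h, c g - 1> = cnj c h(0) - g(0) h(0) = 0. Hence
  ||q f g - 1||^2 = ||q f - c||^2 + ||c g - 1||^2, so Q_n(1/(fg)) is the best approximation of
  the constant c by the multiples q f with deg q <= n, and this is c Q_n(1/f), by scaling for
  c /= 0 and by the injectivity of q |-> q f for c = 0.
\<close>

section \<open>Taylor coefficients\<close>

abbreviation unit_disc :: "complex set" where
  "unit_disc \<equiv> ball 0 1"

lemma analytic_on_poly [analytic_intros]: "poly p analytic_on S"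
  using analytic_on_open[of UNIV "poly p"] analytic_on_subset[of "poly p" UNIV S]
  by (auto intro: holomorphic_intros)

lemma analytic_at_0_if_holomorphic_on_unit_disc:
  "F holomorphic_on unit_disc \<Longrightarrow> F analytic_on {0}"
  by (rule holomorphic_on_imp_analytic_at) auto

definition seq_conv :: "(nat \<Rightarrow> complex) \<Rightarrow> (nat \<Rightarrow> complex) \<Rightarrow> nat \<Rightarrow> complex" where
  "seq_conv a b k = (\<Sum>i\<le>k. a i * b (k - i))"

lemma taylor_coeff_0: "taylor_coeff F 0 = F 0"
  unfolding taylor_coeff_def by simp

lemma taylor_coeff_const: "taylor_coeff (\<lambda>z. c) k = (if k = 0 then c else 0)"
  unfolding taylor_coeff_def by simp

lemma taylor_coeff_add:
  "F analytic_on {0} \<Longrightarrow> G analytic_on {0} \<Longrightarrow>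
     taylor_coeff (\<lambda>z. F z + G z) k = taylor_coeff F k + taylor_coeff G k"
  unfolding taylor_coeff_def by (simp add: higher_deriv_add_at add_divide_distrib)

lemma taylor_coeff_diff:
  "F analytic_on {0} \<Longrightarrow> G analytic_on {0} \<Longrightarrow>
     taylor_coeff (\<lambda>z. F z - G z) k = taylor_coeff F k - taylor_coeff G k"
  unfolding taylor_coeff_def by (simp add: higher_deriv_diff_at diff_divide_distrib)

lemma taylor_coeff_cmult:
  "F analytic_on {0} \<Longrightarrow> taylor_coeff (\<lambda>z. c * F z) k = c * taylor_coeff F k"
  unfolding taylor_coeff_def by (simp add: higher_deriv_cmult')

lemma taylor_coeff_sum:
  assumes "finite A" "\<And>i. i \<in> A \<Longrightarrow> F i analytic_on {0}"
  shows "taylor_coeff (\<lambda>z. \<Sum>i\<in>A. F i z) k = (\<Sum>i\<in>A. taylor_coeff (F i) k)"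
  using assms
proof (induction A rule: finite_induct)
  case empty
  then show ?case by (simp add: taylor_coeff_const)
next
  case (insert x A)
  then show ?case
    by (simp add: taylor_coeff_add analytic_on_sum)
qed

lemma taylor_coeff_mult:
  assumes "F analytic_on {0}" "G analytic_on {0}"
  shows "taylor_coeff (\<lambda>z. F z * G z) k = seq_conv (taylor_coeff F) (taylor_coeff G) k"
proof -
  have "taylor_coeff (\<lambda>z. F z * G z) k =
     (\<Sum>i\<le>k. of_nat (k choose i) * (deriv ^^ i) F 0 * (deriv ^^ (k - i)) G 0 / fact k)"
    unfolding taylor_coeff_def higher_deriv_mult_at[OF assms] atLeast0AtMost
    by (simp add: sum_divide_distrib)
  also have "\<dots> = (\<Sum>i\<le>k. taylor_coeff F i * taylor_coeff G (k - i))"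
    by (intro sum.cong refl) (simp add: taylor_coeff_def binomial_fact field_simps)
  finally show ?thesis unfolding seq_conv_def .
qed

lemma taylor_coeff_poly: "taylor_coeff (poly p) = coeff p"
proof
  fix k
  have deriv_poly: "deriv (poly q) = poly (pderiv q)" for q :: "complex poly"
    by (rule ext, rule DERIV_imp_deriv, rule poly_DERIV)
  have "(deriv ^^ k) (poly p) = poly ((pderiv ^^ k) p)"
    by (induction k) (simp_all add: deriv_poly)
  then show "taylor_coeff (poly p) k = coeff p k"
    unfolding taylor_coeff_def by (simp add: poly_0_coeff_0 coeff_higher_pderiv flip: pochhammer_fact)
qed

lemma taylor_coeff_sums:
  assumes "F holomorphic_on ball 0 R" "w \<in> ball 0 R"
  shows "(\<lambda>k. taylor_coeff F k * w ^ k) sums F w"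
  using holomorphic_power_series[OF assms] unfolding taylor_coeff_def by simp

lemma taylor_coeff_abs_summable:
  assumes F: "F holomorphic_on ball 0 R" and r: "0 \<le> r" "r < R"
  shows "summable (\<lambda>k. norm (taylor_coeff F k) * r ^ k)"
proof -
  define r0 where "r0 = (r + R) / 2"
  have r0: "r < r0" "r0 < R"
    using r unfolding r0_def by simp_all
  have "(of_real r0 :: complex) \<in> ball 0 R"
    using r r0 by simp
  then have "summable (\<lambda>k. taylor_coeff F k * of_real r0 ^ k)"
    using taylor_coeff_sums[OF F] sums_summable by blast
  then obtain M where "\<And>k. norm (taylor_coeff F k * of_real r0 ^ k) \<le> M"
    using summable_imp_Bseq[THEN BseqE] by metis
  then have "norm (taylor_coeff F k) * r0 ^ k \<le> M" for k
    using r r0 by (simp add: norm_mult norm_power)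
  then show ?thesis
    by (rule Abel_lemma[OF r(1) r0(1)])
qed

section \<open>Square-summable sequences\<close>

definition l2 :: "(nat \<Rightarrow> complex) \<Rightarrow> bool" where
  "l2 a \<longleftrightarrow> summable (\<lambda>k. (norm (a k))\<^sup>2)"

definition l2_sqnorm :: "(nat \<Rightarrow> complex) \<Rightarrow> real" where
  "l2_sqnorm a = (\<Sum>k. (norm (a k))\<^sup>2)"

definition l2_inner :: "(nat \<Rightarrow> complex) \<Rightarrow> (nat \<Rightarrow> complex) \<Rightarrow> complex" where
  "l2_inner a b = (\<Sum>k. a k * cnj (b k))"

lemma H2_iff_l2: "F \<in> H2 \<longleftrightarrow> F holomorphic_on unit_disc \<and> l2 (taylor_coeff F)"
  unfolding H2_def l2_def by simp

lemma H2_norm_eq: "H2_norm F = sqrt (l2_sqnorm (taylor_coeff F))"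
  unfolding H2_norm_def l2_sqnorm_def ..

lemma l2_sqnorm_sums: "l2 a \<Longrightarrow> (\<lambda>k. (norm (a k))\<^sup>2) sums l2_sqnorm a"
  unfolding l2_sqnorm_def l2_def by (simp add: summable_sums)

lemma l2_sqnorm_nonneg: "l2 a \<Longrightarrow> 0 \<le> l2_sqnorm a"
  unfolding l2_sqnorm_def l2_def by (simp add: suminf_nonneg)

lemma l2_sqnorm_eq_0_iff: "l2 a \<Longrightarrow> l2_sqnorm a = 0 \<longleftrightarrow> (\<forall>k. a k = 0)"
  unfolding l2_sqnorm_def l2_def by (subst suminf_eq_zero_iff) auto

lemma l2_sqnorm_cmult: "l2 a \<Longrightarrow> l2_sqnorm (\<lambda>k. c * a k) = (norm c)\<^sup>2 * l2_sqnorm a"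
  unfolding l2_sqnorm_def l2_def by (simp add: norm_mult power_mult_distrib suminf_mult)

lemma l2_sqnorm_diff_commute: "l2_sqnorm (\<lambda>k. a k - b k) = l2_sqnorm (\<lambda>k. b k - a k)"
  unfolding l2_sqnorm_def by (simp add: norm_minus_commute)

lemma l2_finite_support: "(\<And>k. N \<le> k \<Longrightarrow> a k = 0) \<Longrightarrow> l2 a"
  unfolding l2_def by (rule summable_finite[of "{..<N}"]) (auto simp: not_less)

definition delta0 :: "nat \<Rightarrow> complex" where
  "delta0 k = (if k = 0 then 1 else 0)"

lemma l2_delta0: "l2 delta0"
  by (rule l2_finite_support[of 1]) (simp add: delta0_def)

lemma l2_cmult: "l2 a \<Longrightarrow> l2 (\<lambda>k. c * a k)"
  unfolding l2_def by (simp add: norm_mult power_mult_distrib summable_mult)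

lemma norm_mult_cnj_le: "norm (x * cnj y) \<le> ((norm x)\<^sup>2 + (norm y)\<^sup>2) / 2"
proof -
  have "0 \<le> (norm x - norm y)\<^sup>2" by simp
  then show ?thesis by (simp add: norm_mult power2_eq_square algebra_simps)
qed

lemma l2_add:
  assumes "l2 a" "l2 b"
  shows "l2 (\<lambda>k. a k + b k)"
proof -
  have "(norm (a k + b k))\<^sup>2 \<le> 2 * (norm (a k))\<^sup>2 + 2 * (norm (b k))\<^sup>2" for k
  proof -
    have "(norm (a k + b k))\<^sup>2 \<le> (norm (a k) + norm (b k))\<^sup>2"
      by (simp add: norm_triangle_ineq power_mono)
    also have "\<dots> \<le> 2 * (norm (a k))\<^sup>2 + 2 * (norm (b k))\<^sup>2"
      using norm_mult_cnj_le[of "a k" "b k"] by (simp add: power2_eq_square algebra_simps norm_mult)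
    finally show ?thesis .
  qed
  moreover have "summable (\<lambda>k. 2 * (norm (a k))\<^sup>2 + 2 * (norm (b k))\<^sup>2)"
    using assms unfolding l2_def by (intro summable_add summable_mult)
  ultimately show ?thesis
    unfolding l2_def by (intro summable_comparison_test[of "\<lambda>k. (norm (a k + b k))\<^sup>2"]) auto
qed

lemma l2_uminus: "l2 a \<Longrightarrow> l2 (\<lambda>k. - a k)"
  unfolding l2_def by simp

lemma l2_diff: "l2 a \<Longrightarrow> l2 b \<Longrightarrow> l2 (\<lambda>k. a k - b k)"
  using l2_add[of a "\<lambda>k. - b k"] l2_uminus by simp

lemma l2_sum: "finite A \<Longrightarrow> (\<And>i. i \<in> A \<Longrightarrow> l2 (a i)) \<Longrightarrow> l2 (\<lambda>k. \<Sum>i\<in>A. a i k)"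
  by (induction A rule: finite_induct) (auto intro: l2_add l2_finite_support)

lemma l2_inner_sums:
  assumes "l2 a" "l2 b"
  shows "(\<lambda>k. a k * cnj (b k)) sums l2_inner a b"
proof -
  have "summable (\<lambda>k. ((norm (a k))\<^sup>2 + (norm (b k))\<^sup>2) / 2)"
    using assms unfolding l2_def by (intro summable_divide summable_add)
  then have "summable (\<lambda>k. norm (a k * cnj (b k)))"
    by (rule summable_comparison_test'[where N = 0])
       (simp only: real_norm_def abs_norm_cancel norm_mult_cnj_le)
  then show ?thesis
    unfolding l2_inner_def by (simp add: summable_norm_cancel summable_sums)
qed

lemma l2_inner_self:
  assumes "l2 a"
  shows "l2_inner a a = of_real (l2_sqnorm a)"
proof -
  have "(\<lambda>k. complex_of_real ((norm (a k))\<^sup>2)) sums of_real (l2_sqnorm a)"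
    by (rule sums_of_real[OF l2_sqnorm_sums[OF assms]])
  then have "(\<lambda>k. a k * cnj (a k)) sums of_real (l2_sqnorm a)"
    by (simp only: complex_norm_square)
  then show ?thesis
    using l2_inner_sums[OF assms assms] sums_unique2 by blast
qed

lemma l2_inner_delta0: "l2 a \<Longrightarrow> l2_inner a delta0 = a 0"
  using l2_inner_sums[OF _ l2_delta0, of a] sums_single[of 0 a]
  by (simp add: delta0_def if_distrib sums_unique2 cong: if_cong)

lemma l2_inner_commute: "l2 a \<Longrightarrow> l2 b \<Longrightarrow> l2_inner b a = cnj (l2_inner a b)"
  using l2_inner_sums[of a b, THEN sums_cnj[THEN iffD2]] l2_inner_sums[of b a]
  by (simp add: mult.commute sums_unique2)

lemma l2_inner_add_left:
  "l2 a \<Longrightarrow> l2 b \<Longrightarrow> l2 c \<Longrightarrow> l2_inner (\<lambda>k. a k + b k) c = l2_inner a c + l2_inner b c"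
  using sums_add[OF l2_inner_sums[of a c] l2_inner_sums[of b c]]
    l2_inner_sums[of "\<lambda>k. a k + b k" c] l2_add
  by (simp add: distrib_right sums_unique2)

lemma l2_inner_cmult_left: "l2 a \<Longrightarrow> l2 c \<Longrightarrow> l2_inner (\<lambda>k. x * a k) c = x * l2_inner a c"
  using sums_mult[OF l2_inner_sums[of a c], of x] l2_inner_sums[of "\<lambda>k. x * a k" c] l2_cmult
  by (simp add: mult.assoc sums_unique2)

lemma l2_inner_diff_left:
  assumes "l2 a" "l2 b" "l2 c"
  shows "l2_inner (\<lambda>k. a k - b k) c = l2_inner a c - l2_inner b c"
  using l2_inner_add_left[of a "\<lambda>k. - b k" c] l2_inner_cmult_left[of b c "- 1"] assms
  by (simp add: l2_uminus)

lemma l2_inner_add_right: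
  "l2 a \<Longrightarrow> l2 b \<Longrightarrow> l2 c \<Longrightarrow> l2_inner c (\<lambda>k. a k + b k) = l2_inner c a + l2_inner c b"
  by (simp add: l2_inner_commute[of _ c] l2_inner_add_left l2_add)

lemma l2_inner_cmult_right: "l2 a \<Longrightarrow> l2 c \<Longrightarrow> l2_inner c (\<lambda>k. x * a k) = cnj x * l2_inner c a"
  by (simp add: l2_inner_commute[of _ c] l2_inner_cmult_left l2_cmult)

lemma l2_inner_diff_right:
  "l2 a \<Longrightarrow> l2 b \<Longrightarrow> l2 c \<Longrightarrow> l2_inner c (\<lambda>k. a k - b k) = l2_inner c a - l2_inner c b"
  by (simp add: l2_inner_commute[of _ c] l2_inner_diff_left l2_diff)

lemma l2_inner_sum_right:
  assumes "finite A" "\<And>i. i \<in> A \<Longrightarrow> l2 (e i)" "l2 c"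
  shows "l2_inner c (\<lambda>k. \<Sum>i\<in>A. \<beta> i * e i k) = (\<Sum>i\<in>A. cnj (\<beta> i) * l2_inner c (e i))"
  using assms
proof (induction A rule: finite_induct)
  case empty
  then show ?case unfolding l2_inner_def by simp
next
  case (insert x A)
  then show ?case
    by (simp add: l2_inner_add_right l2_inner_cmult_right l2_cmult l2_sum)
qed

lemma l2_sqnorm_add:
  assumes "l2 a" "l2 b"
  shows "l2_sqnorm (\<lambda>k. a k + b k) = l2_sqnorm a + l2_sqnorm b + 2 * Re (l2_inner a b)"
proof -
  have "complex_of_real (l2_sqnorm (\<lambda>k. a k + b k))
      = l2_inner a a + l2_inner b b + (l2_inner a b + cnj (l2_inner a b))"
    using assms
    by (simp add: l2_inner_self[symmetric] l2_add l2_inner_add_left l2_inner_add_right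
        l2_inner_commute[of a b])
  also have "\<dots> = of_real (l2_sqnorm a + l2_sqnorm b + 2 * Re (l2_inner a b))"
    using assms by (simp add: l2_inner_self complex_add_cnj)
  finally show ?thesis by (simp only: of_real_eq_iff)
qed

lemma l2_sqnorm_diff:
  assumes "l2 a" "l2 b"
  shows "l2_sqnorm (\<lambda>k. a k - b k) = l2_sqnorm a + l2_sqnorm b - 2 * Re (l2_inner a b)"
  using l2_sqnorm_add[of a "\<lambda>k. - b k"] l2_sqnorm_cmult[of b "- 1"]
    l2_inner_cmult_right[of b a "- 1"] assms
  by (simp add: l2_uminus)

lemma l2_parallelogram:
  "l2 a \<Longrightarrow> l2 b \<Longrightarrow>
     l2_sqnorm (\<lambda>k. a k + b k) + l2_sqnorm (\<lambda>k. a k - b k) = 2 * l2_sqnorm a + 2 * l2_sqnorm b"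
  by (simp add: l2_sqnorm_add l2_sqnorm_diff)

lemma l2_Cauchy_Schwarz:
  assumes "l2 a" "l2 b"
  shows "(norm (l2_inner a b))\<^sup>2 \<le> l2_sqnorm a * l2_sqnorm b"
proof (cases "l2_sqnorm b = 0")
  case True
  then have "l2_inner a b = 0"
    using assms l2_sqnorm_eq_0_iff unfolding l2_inner_def by simp
  then show ?thesis
    using assms by (simp add: l2_sqnorm_nonneg)
next
  case False
  then have nb: "l2_sqnorm b > 0"
    using l2_sqnorm_nonneg[OF assms(2)] by simp
  define t where "t = l2_inner a b / of_real (l2_sqnorm b)"
  have "0 \<le> l2_sqnorm (\<lambda>k. a k - t * b k)"
    using assms by (intro l2_sqnorm_nonneg l2_diff l2_cmult)
  also have "\<dots> = l2_sqnorm a + (norm t)\<^sup>2 * l2_sqnorm b - 2 * Re (cnj t * l2_inner a b)"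
    using assms by (simp add: l2_sqnorm_diff l2_cmult l2_sqnorm_cmult l2_inner_cmult_right)
  also have "cnj t * l2_inner a b = of_real ((norm (l2_inner a b))\<^sup>2 / l2_sqnorm b)"
    unfolding t_def by (simp add: complex_norm_square mult.commute flip: of_real_power)
  also have "(norm t)\<^sup>2 * l2_sqnorm b = (norm (l2_inner a b))\<^sup>2 / l2_sqnorm b"
    unfolding t_def using nb by (simp add: norm_divide power2_eq_square)
  finally show ?thesis
    using nb by (simp add: pos_divide_le_eq)
qed

lemma l2_norm_triangle:
  assumes "l2 a" "l2 b"
  shows "sqrt (l2_sqnorm (\<lambda>k. a k + b k)) \<le> sqrt (l2_sqnorm a) + sqrt (l2_sqnorm b)"
proof -
  have "Re (l2_inner a b) \<le> norm (l2_inner a b)"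
    by (rule complex_Re_le_cmod)
  also have "\<dots> \<le> sqrt (l2_sqnorm a * l2_sqnorm b)"
    using l2_Cauchy_Schwarz[OF assms] by (simp add: real_le_rsqrt)
  finally have "l2_sqnorm (\<lambda>k. a k + b k) \<le> (sqrt (l2_sqnorm a) + sqrt (l2_sqnorm b))\<^sup>2"
    using assms l2_sqnorm_nonneg[OF assms(1)] l2_sqnorm_nonneg[OF assms(2)]
    by (simp add: l2_sqnorm_add power2_sum real_sqrt_mult)
  then show ?thesis
    using assms by (simp add: real_le_lsqrt l2_sqnorm_nonneg)
qed

lemma l2_norm_triangle_diff:
  assumes "l2 a" "l2 b"
  shows "sqrt (l2_sqnorm (\<lambda>k. a k - b k)) \<le> sqrt (l2_sqnorm a) + sqrt (l2_sqnorm b)"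
proof -
  have "l2_sqnorm (\<lambda>k. - b k) = l2_sqnorm b"
    unfolding l2_sqnorm_def by simp
  then show ?thesis
    using l2_norm_triangle[OF assms(1) l2_uminus[OF assms(2)]] by simp
qed

section \<open>Best approximation by a finite linear combination\<close>

lemma l2_lincomb:
  "finite A \<Longrightarrow> (\<And>i. i \<in> A \<Longrightarrow> l2 (e i)) \<Longrightarrow> l2 (\<lambda>k. \<Sum>i\<in>A. \<beta> i * e i k)"
  by (intro l2_sum l2_cmult) auto

lemma l2_inner_lincomb_eq_0:
  assumes "finite A" "\<And>i. i \<in> A \<Longrightarrow> l2 (e i)" "l2 r" "\<And>i. i \<in> A \<Longrightarrow> l2_inner r (e i) = 0"
  shows "l2_inner r (\<lambda>k. \<Sum>i\<in>A. \<beta> i * e i k) = 0"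
  using assms by (simp add: l2_inner_sum_right)

lemma l2_gram_schmidt_step:
  fixes n :: nat
  assumes e: "\<And>i. l2 (e i)" and r: "l2 r" and w: "l2 w"
    and r_orth: "\<And>j. j < n \<Longrightarrow> l2_inner r (e j) = 0"
    and w_orth: "\<And>j. j < n \<Longrightarrow> l2_inner w (e j) = 0"
    and e_n: "e n = (\<lambda>k. w k + (\<Sum>i<n. \<gamma> i * e i k))"
    and \<alpha>: "\<alpha> = l2_inner r w / of_real (l2_sqnorm w)"
  shows "\<forall>j<Suc n. l2_inner (\<lambda>k. r k - \<alpha> * w k) (e j) = 0"
proof -
  define u where "u = (\<lambda>k. r k - \<alpha> * w k)"
  have u: "l2 u"
    unfolding u_def using r w by (simp add: l2_diff l2_cmult)
  \<comment> \<open>If w = 0 then \<alpha> = 0 by division by zero, and both sides vanish.\<close>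
  have rw: "l2_inner r w = \<alpha> * of_real (l2_sqnorm w)"
  proof (cases "l2_sqnorm w = 0")
    case True
    then show ?thesis
      using w l2_sqnorm_eq_0_iff unfolding l2_inner_def by simp
  qed (simp add: \<alpha>)
  have u_e: "l2_inner u (e j) = 0" if "j < n" for j
    unfolding u_def using r_orth w_orth that r w e
    by (simp add: l2_inner_diff_left l2_inner_cmult_left l2_cmult)
  have "l2_inner u w = 0"
    unfolding u_def using r w rw by (simp add: l2_inner_diff_left l2_inner_cmult_left l2_cmult l2_inner_self)
  moreover have "l2_inner u (\<lambda>k. \<Sum>i<n. \<gamma> i * e i k) = 0"
    using e u u_e by (intro l2_inner_lincomb_eq_0) auto
  ultimately have "l2_inner u (e n) = 0"
    unfolding e_n using u w e by (simp add: l2_inner_add_right l2_lincomb)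
  then show ?thesis
    using u_e unfolding u_def by (simp add: less_Suc_eq)
qed

lemma l2_orthogonal_projection_exists:
  fixes n :: nat
  assumes e: "\<And>i. l2 (e i)" and x: "l2 x"
  shows "\<exists>\<beta>. \<forall>j<n. l2_inner (\<lambda>k. x k - (\<Sum>i<n. \<beta> i * e i k)) (e j) = 0"
  using x
proof (induction n arbitrary: x)
  case 0
  then show ?case by simp
next
  case (Suc n)
  obtain \<beta> where \<beta>: "\<forall>j<n. l2_inner (\<lambda>k. x k - (\<Sum>i<n. \<beta> i * e i k)) (e j) = 0"
    using Suc.IH[OF Suc.prems] by blast
  obtain \<gamma> where \<gamma>: "\<forall>j<n. l2_inner (\<lambda>k. e n k - (\<Sum>i<n. \<gamma> i * e i k)) (e j) = 0"
    using Suc.IH[OF e] by blast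
  define r where "r = (\<lambda>k. x k - (\<Sum>i<n. \<beta> i * e i k))"
  define w where "w = (\<lambda>k. e n k - (\<Sum>i<n. \<gamma> i * e i k))"
  define \<alpha> where "\<alpha> = l2_inner r w / of_real (l2_sqnorm w)"
  have r: "l2 r" and w: "l2 w"
    unfolding r_def w_def using Suc.prems e by (simp_all add: l2_diff l2_lincomb)
  have e_n: "e n = (\<lambda>k. w k + (\<Sum>i<n. \<gamma> i * e i k))"
    unfolding w_def by simp
  have orth: "\<forall>j<Suc n. l2_inner (\<lambda>k. r k - \<alpha> * w k) (e j) = 0"
  proof (rule l2_gram_schmidt_step[OF e r w _ _ e_n \<alpha>_def])
    show "l2_inner r (e j) = 0" if "j < n" for j
      using \<beta> that unfolding r_def by simp
    show "l2_inner w (e j) = 0" if "j < n" for j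
      using \<gamma> that unfolding w_def by simp
  qed
  define \<beta>' where "\<beta>' i = (if i = n then \<alpha> else \<beta> i - \<alpha> * \<gamma> i)" for i
  have "(\<Sum>i<n. \<beta>' i * e i k) = (\<Sum>i<n. (\<beta> i - \<alpha> * \<gamma> i) * e i k)" for k
    by (rule sum.cong) (auto simp: \<beta>'_def)
  then have "(\<lambda>k. x k - (\<Sum>i<Suc n. \<beta>' i * e i k)) = (\<lambda>k. r k - \<alpha> * w k)"
    unfolding r_def w_def
    by (simp add: fun_eq_iff \<beta>'_def algebra_simps sum_subtractf sum_distrib_left)
  then show ?case
    using orth by metis
qed

lemma l2_orthogonal_projection_minimal:
  fixes n :: nat
  assumes e: "\<And>i. l2 (e i)" and x: "l2 x"
    and orth: "\<forall>j<n. l2_inner (\<lambda>k. x k - (\<Sum>i<n. \<beta> i * e i k)) (e j) = 0"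
  shows "l2_sqnorm (\<lambda>k. x k - (\<Sum>i<n. \<beta> i * e i k)) \<le> l2_sqnorm (\<lambda>k. x k - (\<Sum>i<n. \<gamma> i * e i k))"
proof -
  define u where "u = (\<lambda>k. x k - (\<Sum>i<n. \<beta> i * e i k))"
  define v where "v = (\<lambda>k. \<Sum>i<n. (\<beta> i - \<gamma> i) * e i k)"
  have u: "l2 u" and v: "l2 v"
    unfolding u_def v_def using x e by (simp_all add: l2_diff l2_lincomb)
  have "l2_inner u v = 0"
  proof (unfold v_def, rule l2_inner_lincomb_eq_0)
    show "l2_inner u (e j) = 0" if "j \<in> {..<n}" for j
      using orth that unfolding u_def by simp
  qed (use e u in auto)
  moreover have "(\<lambda>k. x k - (\<Sum>i<n. \<gamma> i * e i k)) = (\<lambda>k. u k + v k)"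
    unfolding u_def v_def by (simp add: fun_eq_iff left_diff_distrib sum_subtractf)
  ultimately have "l2_sqnorm (\<lambda>k. x k - (\<Sum>i<n. \<gamma> i * e i k)) = l2_sqnorm u + l2_sqnorm v"
    using u v by (simp add: l2_sqnorm_add)
  then have "l2_sqnorm u \<le> l2_sqnorm (\<lambda>k. x k - (\<Sum>i<n. \<gamma> i * e i k))"
    using l2_sqnorm_nonneg[OF v] by simp
  then show ?thesis
    by (simp add: u_def)
qed

section \<open>Parseval's identity on circles\<close>

lemma cis_multiple_has_integral:
  fixes m :: int
  shows "((\<lambda>\<theta>. cis (of_int m * \<theta>)) has_integral (if m = 0 then of_real (2 * pi) else 0)) {0..2 * pi}"
proof (cases "m = 0")
  case True
  have "((\<lambda>\<theta>::real. (1::complex)) has_integral (measure lborel {0..2 * pi} *\<^sub>R 1)) {0..2 * pi}"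
    by (rule has_integral_const_real)
  then show ?thesis
    using True by (simp add: scaleR_conv_of_real)
next
  case False
  define F where "F z = exp (\<i> * of_int m * z) / (\<i> * of_int m)" for z :: complex
  have F': "(F has_field_derivative exp (\<i> * of_int m * z)) (at z)" for z
    unfolding F_def using False by (auto intro!: derivative_eq_intros simp: field_simps)
  have "((\<lambda>\<theta>. exp (\<i> * of_int m * of_real \<theta>)) has_integral (F (of_real (2 * pi)) - F (of_real 0))) {0..2 * pi}"
    by (rule fundamental_theorem_of_calculus)
       (auto intro!: has_vector_derivative_real_field[of F, OF F'])
  moreover have "exp (\<i> * of_int m * of_real \<theta>) = cis (of_int m * \<theta>)" for \<theta>
    by (simp add: cis_conv_exp mult_ac)
  moreover have "F (of_real (2 * pi)) = F (of_real 0)"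
    unfolding F_def using cis_multiple_2pi[of "of_int m"]
    by (simp add: cis_conv_exp mult_ac)
  ultimately show ?thesis
    using False by simp
qed

lemma cis_power_orthogonal:
  "((\<lambda>\<theta>. cis \<theta> ^ j * cnj (cis \<theta> ^ k)) has_integral (if j = k then of_real (2 * pi) else 0)) {0..2 * pi}"
proof -
  have "cis \<theta> ^ j * cnj (cis \<theta> ^ k) = cis (real j * \<theta>) * cis (- (real k * \<theta>))" for \<theta>
    by (simp only: Complex.DeMoivre cis_cnj)
  also have "\<dots> \<theta> = cis (of_int (int j - int k) * \<theta>)" for \<theta>
    by (simp only: cis_mult) (simp add: algebra_simps)
  finally have "cis \<theta> ^ j * cnj (cis \<theta> ^ k) = cis (of_int (int j - int k) * \<theta>)" for \<theta> .
  then show ?thesis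
    using cis_multiple_has_integral[of "int j - int k"] by simp
qed

lemma trig_poly_parseval:
  fixes a :: "nat \<Rightarrow> complex"
  shows "((\<lambda>\<theta>. (norm (\<Sum>k<N. a k * cis \<theta> ^ k))\<^sup>2) has_integral
           (2 * pi * (\<Sum>k<N. (norm (a k))\<^sup>2))) {0..2 * pi}"
proof -
  have expand: "complex_of_real ((norm (\<Sum>k<N. a k * cis \<theta> ^ k))\<^sup>2) =
      (\<Sum>j<N. \<Sum>k<N. (a j * cnj (a k)) * (cis \<theta> ^ j * cnj (cis \<theta> ^ k)))" for \<theta>
    unfolding complex_norm_square cnj_sum sum_product by (simp add: mult_ac)
  have "((\<lambda>\<theta>. \<Sum>j<N. \<Sum>k<N. (a j * cnj (a k)) * (cis \<theta> ^ j * cnj (cis \<theta> ^ k))) has_integral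
        (\<Sum>j<N. \<Sum>k<N. (a j * cnj (a k)) * (if j = k then of_real (2 * pi) else 0))) {0..2 * pi}"
    by (intro has_integral_sum finite_lessThan has_integral_mult_right cis_power_orthogonal)
  also have "(\<Sum>j<N. \<Sum>k<N. (a j * cnj (a k)) * (if j = k then of_real (2 * pi) else 0)) =
      (\<Sum>j<N. of_real (2 * pi) * (a j * cnj (a j)))"
    by (simp add: if_distrib sum.delta mult_ac cong: if_cong)
  also have "\<dots> = of_real (2 * pi * (\<Sum>k<N. (norm (a k))\<^sup>2))"
    by (simp only: complex_norm_square of_real_mult of_real_sum sum_distrib_left)
  finally have "((\<lambda>\<theta>. complex_of_real ((norm (\<Sum>k<N. a k * cis \<theta> ^ k))\<^sup>2)) has_integral
       of_real (2 * pi * (\<Sum>k<N. (norm (a k))\<^sup>2))) {0..2 * pi}"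
    unfolding expand .
  from has_integral_linear[OF this bounded_linear_Re] show ?thesis
    by (simp add: o_def)
qed

lemma trig_poly_parseval_set_integral:
  "(LINT \<theta>:{0..2 * pi}|lborel. (norm (\<Sum>k<N. a k * cis \<theta> ^ k))\<^sup>2) = 2 * pi * (\<Sum>k<N. (norm (a k))\<^sup>2)"
proof -
  have "set_integrable lborel {0..2 * pi} (\<lambda>\<theta>. (norm (\<Sum>k<N. a k * cis \<theta> ^ k))\<^sup>2)"
    unfolding set_integrable_def by (rule borel_integrable_compact) (auto intro!: continuous_intros)
  then show ?thesis
    by (simp add: set_borel_integral_eq_integral(2) integral_unique[OF trig_poly_parseval])
qed

lemma set_integral_bounded_convergence:
  fixes s :: "nat \<Rightarrow> real \<Rightarrow> real"
  assumes S: "compact S"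
    and s: "\<And>m. s m \<in> borel_measurable borel" and f: "f \<in> borel_measurable borel"
    and bound: "\<And>m x. x \<in> S \<Longrightarrow> \<bar>s m x\<bar> \<le> C"
    and lim: "AE x in lborel. x \<in> S \<longrightarrow> (\<lambda>m. s m x) \<longlonglongrightarrow> f x"
  shows "(\<lambda>m. LINT x:S|lborel. s m x) \<longlonglongrightarrow> (LINT x:S|lborel. f x)"
proof -
  have S_borel: "S \<in> sets borel"
    using S by (simp add: compact_imp_closed)
  have "(\<lambda>m. integral\<^sup>L lborel (\<lambda>x. indicator S x * s m x)) \<longlonglongrightarrow>
      integral\<^sup>L lborel (\<lambda>x. indicator S x * f x)"
  proof (rule integral_dominated_convergence[where w = "\<lambda>x. indicator S x * C"])
    show "integrable lborel (\<lambda>x. indicator S x * C)"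
      using borel_integrable_compact[OF S, of "\<lambda>_. C"] by (simp add: mult.commute)
    show "(\<lambda>x. indicator S x * f x) \<in> borel_measurable lborel"
      "\<And>m. (\<lambda>x. indicator S x * s m x) \<in> borel_measurable lborel"
      using s f S_borel by simp_all
    show "AE x in lborel. (\<lambda>m. indicator S x * s m x) \<longlonglongrightarrow> indicator S x * f x"
      using lim by eventually_elim (auto simp: indicator_def)
    show "AE x in lborel. norm (indicator S x * s m x) \<le> indicator S x * C" for m
      using bound by (intro AE_I2) (simp add: indicator_def)
  qed
  then show ?thesis
    by (simp add: set_lebesgue_integral_def)
qed

lemma parseval_circle:
  assumes F: "F holomorphic_on ball 0 R" and r: "0 \<le> r" "r < R"
  shows "(\<lambda>k. (norm (taylor_coeff F k))\<^sup>2 * r ^ (2 * k)) sums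
           ((LINT \<theta>:{0..2 * pi}|lborel. (norm (F (of_real r * cis \<theta>)))\<^sup>2) / (2 * pi))"
proof -
  define a where "a k = taylor_coeff F k * of_real r ^ k" for k
  define S where "S N \<theta> = (\<Sum>k<N. a k * cis \<theta> ^ k)" for N \<theta>
  define A where "A = (\<Sum>k. norm (taylor_coeff F k) * r ^ k)"
  have norm_a: "norm (a k) = norm (taylor_coeff F k) * r ^ k" for k
    unfolding a_def using r by (simp add: norm_mult norm_power)
  have S_bound: "norm (S N \<theta>) \<le> A" for N \<theta>
  proof -
    have "norm (S N \<theta>) \<le> (\<Sum>k<N. norm (taylor_coeff F k) * r ^ k)"
      unfolding S_def using norm_sum[of "\<lambda>k. a k * cis \<theta> ^ k"]
      by (simp add: norm_mult norm_power norm_a)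
    also have "\<dots> \<le> A"
      unfolding A_def using r by (intro sum_le_suminf taylor_coeff_abs_summable[OF F]) auto
    finally show ?thesis .
  qed
  have on_circle: "of_real r * cis \<theta> \<in> ball 0 R" for \<theta>
    using r by (simp add: norm_mult)
  have "continuous_on UNIV (\<lambda>\<theta>. F (of_real r * cis \<theta>))"
    using on_circle by (intro continuous_on_compose2[OF holomorphic_on_imp_continuous_on[OF F]])
      (auto intro!: continuous_intros)
  then have "(\<lambda>N. LINT \<theta>:{0..2 * pi}|lborel. (norm (S N \<theta>))\<^sup>2) \<longlonglongrightarrow>
      (LINT \<theta>:{0..2 * pi}|lborel. (norm (F (of_real r * cis \<theta>)))\<^sup>2)"
  proof (intro set_integral_bounded_convergence[where C = "A\<^sup>2"] compact_Icc AE_I2 impI)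
    show "(\<lambda>\<theta>. (norm (S N \<theta>))\<^sup>2) \<in> borel_measurable borel" for N
      unfolding S_def by (intro borel_measurable_continuous_onI continuous_intros)
    show "\<bar>(norm (S N \<theta>))\<^sup>2\<bar> \<le> A\<^sup>2" for N \<theta>
      using S_bound[of N \<theta>] by (simp add: power_mono)
    show "(\<lambda>N. (norm (S N \<theta>))\<^sup>2) \<longlonglongrightarrow> (norm (F (of_real r * cis \<theta>)))\<^sup>2" for \<theta>
      using taylor_coeff_sums[OF F on_circle]
      unfolding sums_def S_def a_def by (intro tendsto_intros) (simp add: power_mult_distrib mult_ac)
  qed (auto intro!: borel_measurable_continuous_onI continuous_intros)
  moreover have "(LINT \<theta>:{0..2 * pi}|lborel. (norm (S N \<theta>))\<^sup>2) =
      2 * pi * (\<Sum>k<N. (norm (taylor_coeff F k))\<^sup>2 * r ^ (2 * k))" for N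
    unfolding S_def trig_poly_parseval_set_integral
    by (simp add: norm_a power_mult_distrib power_mult[symmetric] mult.commute[of 2])
  ultimately have "(\<lambda>N. 2 * pi * (\<Sum>k<N. (norm (taylor_coeff F k))\<^sup>2 * r ^ (2 * k)) / (2 * pi))
      \<longlonglongrightarrow> (LINT \<theta>:{0..2 * pi}|lborel. (norm (F (of_real r * cis \<theta>)))\<^sup>2) / (2 * pi)"
    by (intro tendsto_divide tendsto_const) auto
  then show ?thesis
    unfolding sums_def by simp
qed

lemma nonneg_sums_if_weighted_sums_tendsto:
  fixes b :: "nat \<Rightarrow> real"
  assumes b: "\<And>k. 0 \<le> b k" and w: "\<And>m k. 0 \<le> w m k" "\<And>m k. w m k \<le> 1"
    and w_lim: "\<And>k. (\<lambda>m. w m k) \<longlonglongrightarrow> 1"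
    and T: "\<And>m. (\<lambda>k. b k * w m k) sums T m" "T \<longlonglongrightarrow> T0"
  shows "b sums T0"
proof -
  have partial: "(\<Sum>k<K. b k) \<le> T0" for K
  proof -
    have "(\<lambda>m. \<Sum>k<K. b k * w m k) \<longlonglongrightarrow> (\<Sum>k<K. b k * 1)"
      by (intro tendsto_intros w_lim)
    moreover have "(\<Sum>k<K. b k * w m k) \<le> T m" for m
      using sum_le_suminf[OF sums_summable[OF T(1)], of "{..<K}"] sums_unique[OF T(1)] b w
      by auto
    ultimately show ?thesis
      using T(2) by (simp add: LIMSEQ_le)
  qed
  have b_summable: "summable b"
    by (rule summableI_nonneg_bounded[OF b partial])
  have "T m \<le> suminf b" for m
    unfolding sums_unique[OF T(1)]
    using b w by (intro suminf_le sums_summable[OF T(1)] b_summable) (simp add: mult_left_le)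
  then have "T0 \<le> suminf b"
    using T(2) by (simp add: LIMSEQ_le_const2)
  moreover have "suminf b \<le> T0"
    by (rule suminf_le_const[OF b_summable partial])
  ultimately show ?thesis
    using b_summable summable_sums by fastforce
qed

lemma circle_integrals_tendsto_boundary_integral:
  fixes G :: "complex \<Rightarrow> complex" and h :: "real \<Rightarrow> real"
  assumes G: "G holomorphic_on unit_disc" and G_bound: "\<And>z. z \<in> unit_disc \<Longrightarrow> norm (G z) \<le> C"
    and h: "h \<in> borel_measurable borel"
    and radial_lim: "AE \<theta> in lborel. \<theta> \<in> {0..2 * pi} \<longrightarrow>
                       ((\<lambda>r. (norm (G (of_real r * cis \<theta>)))\<^sup>2) \<longlongrightarrow> h \<theta>) (at_left 1)"
    and r: "\<And>m. 0 \<le> r m" "\<And>m. r m < 1" "filterlim r (at_left 1) sequentially"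
  shows "(\<lambda>m. LINT \<theta>:{0..2 * pi}|lborel. (norm (G (of_real (r m) * cis \<theta>)))\<^sup>2) \<longlonglongrightarrow>
           (LINT \<theta>:{0..2 * pi}|lborel. h \<theta>)"
proof (rule set_integral_bounded_convergence[OF compact_Icc _ h, where C = "C\<^sup>2"])
  have on_circle: "of_real (r m) * cis \<theta> \<in> unit_disc" for m \<theta>
    using r(1,2)[of m] by (simp add: norm_mult)
  show "(\<lambda>\<theta>. (norm (G (of_real (r m) * cis \<theta>)))\<^sup>2) \<in> borel_measurable borel" for m
  proof (intro borel_measurable_continuous_onI continuous_intros)
    show "continuous_on UNIV (\<lambda>\<theta>. G (of_real (r m) * cis \<theta>))"
      using on_circle
      by (intro continuous_on_compose2[OF holomorphic_on_imp_continuous_on[OF G]]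
          continuous_intros) auto
  qed
  show "\<bar>(norm (G (of_real (r m) * cis \<theta>)))\<^sup>2\<bar> \<le> C\<^sup>2" for m \<theta>
    using G_bound[OF on_circle] by (simp add: power_mono)
  show "AE \<theta> in lborel. \<theta> \<in> {0..2 * pi} \<longrightarrow>
      (\<lambda>m. (norm (G (of_real (r m) * cis \<theta>)))\<^sup>2) \<longlonglongrightarrow> h \<theta>"
    using radial_lim
  proof eventually_elim
    case (elim \<theta>)
    then show ?case
      using filterlim_compose[OF _ r(3)] by blast
  qed
qed

lemma parseval_boundary:
  fixes G :: "complex \<Rightarrow> complex" and h :: "real \<Rightarrow> real"
  assumes G: "G holomorphic_on unit_disc" and G_bound: "\<And>z. z \<in> unit_disc \<Longrightarrow> norm (G z) \<le> C"
    and h: "h \<in> borel_measurable borel"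
    and radial_lim: "AE \<theta> in lborel. \<theta> \<in> {0..2 * pi} \<longrightarrow>
                       ((\<lambda>r. (norm (G (of_real r * cis \<theta>)))\<^sup>2) \<longlongrightarrow> h \<theta>) (at_left 1)"
  shows "(\<lambda>k. (norm (taylor_coeff G k))\<^sup>2) sums ((LINT \<theta>:{0..2 * pi}|lborel. h \<theta>) / (2 * pi))"
proof -
  define r where "r m = 1 - inverse (real (Suc m))" for m
  have r: "0 \<le> r m" "r m < 1" for m
    unfolding r_def by (simp_all add: inverse_le_1_iff)
  have "r \<longlonglongrightarrow> 1"
    unfolding r_def using tendsto_diff[OF tendsto_const LIMSEQ_inverse_real_of_nat, of 1] by simp
  then have "filterlim r (at_left 1) sequentially"
    using r by (intro tendsto_imp_filterlim_at_left) auto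
  then have T_lim: "(\<lambda>m. (LINT \<theta>:{0..2 * pi}|lborel. (norm (G (of_real (r m) * cis \<theta>)))\<^sup>2) / (2 * pi))
      \<longlonglongrightarrow> (LINT \<theta>:{0..2 * pi}|lborel. h \<theta>) / (2 * pi)"
    using circle_integrals_tendsto_boundary_integral[OF assms r] by (intro tendsto_divide tendsto_const) auto
  show ?thesis
  proof (rule nonneg_sums_if_weighted_sums_tendsto[OF _ _ _ _ parseval_circle[OF G r] T_lim])
    show "(\<lambda>m. r m ^ (2 * k)) \<longlonglongrightarrow> 1" for k
      using tendsto_power[OF \<open>r \<longlonglongrightarrow> 1\<close>, of "2 * k"] by simp
    show "0 \<le> r m ^ (2 * k)" "r m ^ (2 * k) \<le> 1" for m k
      using r[of m] by (simp_all add: power_le_one)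
  qed simp
qed

lemma poly_radial_limit: "((\<lambda>r. poly p (of_real r * cis \<theta>)) \<longlongrightarrow> poly p (cis \<theta>)) (at_left 1)"
proof -
  have "((\<lambda>r. of_real r * cis \<theta>) \<longlongrightarrow> of_real 1 * cis \<theta>) (at_left 1)"
    by (intro tendsto_intros)
  then show ?thesis
    by (intro tendsto_poly) simp
qed

lemma inner_function_radial_limit_mult_poly:
  assumes "inner_function g"
  shows "AE \<theta> in lborel. \<theta> \<in> {0..2 * pi} \<longrightarrow>
           ((\<lambda>r. (norm (g (of_real r * cis \<theta>) * poly p (of_real r * cis \<theta>)))\<^sup>2)
             \<longlongrightarrow> (norm (poly p (cis \<theta>)))\<^sup>2) (at_left 1)"
proof -
  have "AE \<theta> in lborel. \<theta> \<in> {0..2 * pi} \<longrightarrow>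
      (\<exists>L. ((\<lambda>r. g (of_real r * cis \<theta>)) \<longlongrightarrow> L) (at_left 1) \<and> norm L = 1)"
    using assms unfolding inner_function_def by blast
  then show ?thesis
  proof eventually_elim
    case (elim \<theta>)
    show ?case
    proof
      assume "\<theta> \<in> {0..2 * pi}"
      then obtain L where L: "((\<lambda>r. g (of_real r * cis \<theta>)) \<longlongrightarrow> L) (at_left 1)" "norm L = 1"
        using elim by blast
      have "((\<lambda>r. (norm (g (of_real r * cis \<theta>) * poly p (of_real r * cis \<theta>)))\<^sup>2)
          \<longlongrightarrow> (norm (L * poly p (cis \<theta>)))\<^sup>2) (at_left 1)"
        by (intro tendsto_intros L poly_radial_limit)
      then show "((\<lambda>r. (norm (g (of_real r * cis \<theta>) * poly p (of_real r * cis \<theta>)))\<^sup>2)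
          \<longlongrightarrow> (norm (poly p (cis \<theta>)))\<^sup>2) (at_left 1)"
        using L(2) by (simp add: norm_mult)
    qed
  qed
qed

lemma inner_function_mult_poly_sqnorm_sums:
  assumes g: "inner_function g"
  shows "(\<lambda>k. (norm (taylor_coeff (\<lambda>z. g z * poly p z) k))\<^sup>2) sums l2_sqnorm (coeff p)"
proof -
  have g_hol: "g holomorphic_on unit_disc" and "bounded (g ` unit_disc)"
    using g unfolding inner_function_def by auto
  then obtain M where M: "\<And>z. z \<in> unit_disc \<Longrightarrow> norm (g z) \<le> M"
    unfolding bounded_iff by blast
  have "continuous_on (cball 0 1) (poly p)"
    by (intro continuous_intros)
  then obtain P where P: "\<And>z. z \<in> cball 0 1 \<Longrightarrow> norm (poly p z) \<le> P"
    using continuous_on_compact_bound[OF compact_cball] by blast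
  have "0 \<le> M"
    using M[of 0] by (meson centre_in_ball norm_ge_zero order_trans zero_less_one)
  then have gp_bound: "norm (g z * poly p z) \<le> M * P" if "z \<in> unit_disc" for z
    using M[OF that] P[of z] that by (auto simp: norm_mult intro!: mult_mono)
  define h where "h \<theta> = (norm (poly p (cis \<theta>)))\<^sup>2" for \<theta>
  have h: "h \<in> borel_measurable borel"
    unfolding h_def by (intro borel_measurable_continuous_onI continuous_intros)
  have "(\<lambda>k. (norm (taylor_coeff (\<lambda>z. g z * poly p z) k))\<^sup>2) sums
      ((LINT \<theta>:{0..2 * pi}|lborel. h \<theta>) / (2 * pi))"
    using inner_function_radial_limit_mult_poly[OF g, of p] unfolding h_def[symmetric]
    by (intro parseval_boundary[OF _ gp_bound h]) (simp_all add: holomorphic_intros g_hol)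
  moreover have "(\<lambda>k. (norm (coeff p k))\<^sup>2) sums ((LINT \<theta>:{0..2 * pi}|lborel. h \<theta>) / (2 * pi))"
  proof -
    have "AE \<theta> in lborel. \<theta> \<in> {0..2 * pi} \<longrightarrow>
        ((\<lambda>r. (norm (poly p (of_real r * cis \<theta>)))\<^sup>2) \<longlongrightarrow> h \<theta>) (at_left 1)"
      unfolding h_def by (intro AE_I2 impI tendsto_intros poly_radial_limit)
    moreover have "norm (poly p z) \<le> P" if "z \<in> unit_disc" for z
      using P that by simp
    ultimately show ?thesis
      using parseval_boundary[of "poly p" P h] h by (simp add: taylor_coeff_poly holomorphic_intros)
  qed
  ultimately show ?thesis
    unfolding l2_sqnorm_def by (metis sums_unique)
qed

section \<open>Convolution operators that are isometric on polynomials\<close>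

definition conv_isometric_on_polys :: "(nat \<Rightarrow> complex) \<Rightarrow> bool" where
  "conv_isometric_on_polys \<gamma> \<longleftrightarrow>
     (\<forall>p. (\<lambda>k. (norm (seq_conv \<gamma> (coeff p) k))\<^sup>2) sums l2_sqnorm (coeff p))"

lemma inner_function_conv_isometric_on_polys:
  assumes g: "inner_function g"
  shows "conv_isometric_on_polys (taylor_coeff g)"
proof -
  have "g analytic_on {0}"
    using g unfolding inner_function_def by (auto intro: analytic_at_0_if_holomorphic_on_unit_disc)
  then have "taylor_coeff (\<lambda>z. g z * poly p z) = seq_conv (taylor_coeff g) (coeff p)" for p
    by (auto simp: taylor_coeff_mult taylor_coeff_poly analytic_intros)
  then show ?thesis
    using inner_function_mult_poly_sqnorm_sums[OF g]
    unfolding conv_isometric_on_polys_def by metis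
qed

definition trunc_poly :: "nat \<Rightarrow> (nat \<Rightarrow> complex) \<Rightarrow> complex poly" where
  "trunc_poly N c = (\<Sum>k<N. monom (c k) k)"

lemma coeff_trunc_poly: "coeff (trunc_poly N c) k = (if k < N then c k else 0)"
  unfolding trunc_poly_def by (simp add: coeff_sum coeff_monom)

lemma l2_sqnorm_trunc_poly: "l2_sqnorm (coeff (trunc_poly N c)) = (\<Sum>k<N. (norm (c k))\<^sup>2)"
  unfolding l2_sqnorm_def by (subst suminf_finite[of "{..<N}"]) (auto simp: coeff_trunc_poly)

lemma l2_coeff: "l2 (coeff p)"
  by (rule l2_finite_support[of "Suc (degree p)"]) (simp add: coeff_eq_0)

lemma l2_sqnorm_tail_tendsto_0:
  assumes "l2 c"
  shows "(\<lambda>N. l2_sqnorm (\<lambda>k. c k - coeff (trunc_poly N c) k)) \<longlonglongrightarrow> 0"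
proof -
  have "(\<lambda>k. (norm (c k - coeff (trunc_poly N c) k))\<^sup>2) =
      (\<lambda>k. (norm (c k))\<^sup>2 - (norm (coeff (trunc_poly N c) k))\<^sup>2)" for N
    by (auto simp: fun_eq_iff coeff_trunc_poly)
  then have "(\<lambda>k. (norm (c k - coeff (trunc_poly N c) k))\<^sup>2) sums
      (l2_sqnorm c - l2_sqnorm (coeff (trunc_poly N c)))" for N
    using sums_diff[OF l2_sqnorm_sums[OF assms] l2_sqnorm_sums[OF l2_coeff]] by simp
  then have "l2_sqnorm (\<lambda>k. c k - coeff (trunc_poly N c) k) = l2_sqnorm c - (\<Sum>k<N. (norm (c k))\<^sup>2)" for N
    unfolding l2_sqnorm_def[of "\<lambda>k. c k - _ k"] l2_sqnorm_trunc_poly[symmetric]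
    by (rule sums_unique[symmetric])
  moreover have "(\<lambda>N. l2_sqnorm c - (\<Sum>k<N. (norm (c k))\<^sup>2)) \<longlonglongrightarrow> l2_sqnorm c - l2_sqnorm c"
    using l2_sqnorm_sums[OF assms] unfolding sums_def by (intro tendsto_intros)
  ultimately show ?thesis
    by simp
qed

lemma seq_conv_trunc_poly: "k < N \<Longrightarrow> seq_conv \<gamma> (coeff (trunc_poly N c)) k = seq_conv \<gamma> c k"
  unfolding seq_conv_def coeff_trunc_poly by (intro sum.cong) auto

lemma seq_conv_add: "seq_conv \<gamma> (\<lambda>k. a k + b k) = (\<lambda>k. seq_conv \<gamma> a k + seq_conv \<gamma> b k)"
  unfolding seq_conv_def by (simp add: distrib_left sum.distrib)

lemma seq_conv_diff: "seq_conv \<gamma> (\<lambda>k. a k - b k) = (\<lambda>k. seq_conv \<gamma> a k - seq_conv \<gamma> b k)"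
  unfolding seq_conv_def by (simp add: right_diff_distrib sum_subtractf)

lemma seq_conv_cmult: "seq_conv \<gamma> (\<lambda>k. x * a k) = (\<lambda>k. x * seq_conv \<gamma> a k)"
  unfolding seq_conv_def by (simp add: sum_distrib_left mult_ac)

lemma
  assumes iso: "conv_isometric_on_polys \<gamma>" and c: "l2 c"
  shows l2_seq_conv: "l2 (seq_conv \<gamma> c)"
    and l2_sqnorm_seq_conv_le: "l2_sqnorm (seq_conv \<gamma> c) \<le> l2_sqnorm c"
proof -
  have partial: "(\<Sum>k<N. (norm (seq_conv \<gamma> c k))\<^sup>2) \<le> l2_sqnorm c" for N
  proof -
    let ?p = "trunc_poly N c"
    have "(\<Sum>k<N. (norm (seq_conv \<gamma> c k))\<^sup>2) = (\<Sum>k<N. (norm (seq_conv \<gamma> (coeff ?p) k))\<^sup>2)"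
      by (simp add: seq_conv_trunc_poly)
    also have "\<dots> \<le> l2_sqnorm (coeff ?p)"
    proof -
      have "(\<lambda>k. (norm (seq_conv \<gamma> (coeff ?p) k))\<^sup>2) sums l2_sqnorm (coeff ?p)"
        using iso unfolding conv_isometric_on_polys_def by blast
      then show ?thesis
        using sum_le_suminf[OF sums_summable, of _ _ "{..<N}"] sums_unique by fastforce
    qed
    also have "\<dots> \<le> l2_sqnorm c"
      unfolding l2_sqnorm_trunc_poly unfolding l2_sqnorm_def using c unfolding l2_def
      by (intro sum_le_suminf) auto
    finally show ?thesis .
  qed
  have "summable (\<lambda>k. (norm (seq_conv \<gamma> c k))\<^sup>2)"
    by (rule summableI_nonneg_bounded[OF _ partial]) simp
  then show "l2 (seq_conv \<gamma> c)" "l2_sqnorm (seq_conv \<gamma> c) \<le> l2_sqnorm c"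
    unfolding l2_def l2_sqnorm_def[of "seq_conv \<gamma> c"] using suminf_le_const partial by auto
qed

lemma l2_sqnorm_seq_conv:
  assumes iso: "conv_isometric_on_polys \<gamma>" and c: "l2 c"
  shows "l2_sqnorm (seq_conv \<gamma> c) = l2_sqnorm c"
proof -
  \<comment> \<open>The isometry holds on the truncations of c, and the convolution of the tails is
    controlled by the contraction property.\<close>
  define t where "t N = (\<lambda>k. c k - coeff (trunc_poly N c) k)" for N
  have t: "l2 (t N)" "l2 (seq_conv \<gamma> (t N))" for N
    unfolding t_def using c l2_coeff by (simp_all add: l2_diff l2_seq_conv[OF iso])
  have Gc: "l2 (seq_conv \<gamma> c)"
    by (rule l2_seq_conv[OF iso c])
  have "sqrt (\<Sum>k<N. (norm (c k))\<^sup>2) \<le> sqrt (l2_sqnorm (seq_conv \<gamma> c)) + sqrt (l2_sqnorm (t N))" for N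
  proof -
    have "(\<lambda>k. (norm (seq_conv \<gamma> (coeff (trunc_poly N c)) k))\<^sup>2) sums l2_sqnorm (coeff (trunc_poly N c))"
      using iso unfolding conv_isometric_on_polys_def by blast
    then have "l2_sqnorm (seq_conv \<gamma> (coeff (trunc_poly N c))) = l2_sqnorm (coeff (trunc_poly N c))"
      unfolding l2_sqnorm_def[of "seq_conv _ _"] by (rule sums_unique[symmetric])
    then have "(\<Sum>k<N. (norm (c k))\<^sup>2) = l2_sqnorm (seq_conv \<gamma> (coeff (trunc_poly N c)))"
      by (simp add: l2_sqnorm_trunc_poly)
    also have "seq_conv \<gamma> (coeff (trunc_poly N c)) = (\<lambda>k. seq_conv \<gamma> c k - seq_conv \<gamma> (t N) k)"
      unfolding t_def seq_conv_diff by simp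
    finally have "sqrt (\<Sum>k<N. (norm (c k))\<^sup>2) \<le>
        sqrt (l2_sqnorm (seq_conv \<gamma> c)) + sqrt (l2_sqnorm (seq_conv \<gamma> (t N)))"
      using l2_norm_triangle_diff[OF Gc t(2)] by simp
    moreover have "sqrt (l2_sqnorm (seq_conv \<gamma> (t N))) \<le> sqrt (l2_sqnorm (t N))"
      using l2_sqnorm_seq_conv_le[OF iso t(1)] by simp
    ultimately show ?thesis
      by linarith
  qed
  moreover have "(\<lambda>N. sqrt (\<Sum>k<N. (norm (c k))\<^sup>2)) \<longlonglongrightarrow> sqrt (l2_sqnorm c)"
    using l2_sqnorm_sums[OF c] unfolding sums_def by (intro tendsto_intros)
  moreover have "(\<lambda>N. sqrt (l2_sqnorm (seq_conv \<gamma> c)) + sqrt (l2_sqnorm (t N)))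
      \<longlonglongrightarrow> sqrt (l2_sqnorm (seq_conv \<gamma> c)) + sqrt 0"
    unfolding t_def by (intro tendsto_intros l2_sqnorm_tail_tendsto_0[OF c])
  ultimately have "sqrt (l2_sqnorm c) \<le> sqrt (l2_sqnorm (seq_conv \<gamma> c)) + sqrt 0"
    by (intro LIMSEQ_le) auto
  then have "sqrt (l2_sqnorm c) \<le> sqrt (l2_sqnorm (seq_conv \<gamma> c))"
    by simp
  then show ?thesis
    using l2_sqnorm_seq_conv_le[OF iso c] by simp
qed

lemma l2_inner_seq_conv:
  assumes iso: "conv_isometric_on_polys \<gamma>" and a: "l2 a" and b: "l2 b"
  shows "l2_inner (seq_conv \<gamma> a) (seq_conv \<gamma> b) = l2_inner a b"
proof -
  have Re_eq: "Re (l2_inner (seq_conv \<gamma> x) (seq_conv \<gamma> y)) = Re (l2_inner x y)"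
    if x: "l2 x" and y: "l2 y" for x y
    using l2_sqnorm_add[OF x y] l2_sqnorm_add[OF l2_seq_conv[OF iso x] l2_seq_conv[OF iso y]]
      l2_sqnorm_seq_conv[OF iso l2_add[OF x y]] l2_sqnorm_seq_conv[OF iso x] l2_sqnorm_seq_conv[OF iso y]
    by (simp add: seq_conv_add)
  have "Im (l2_inner (seq_conv \<gamma> a) (seq_conv \<gamma> b)) = Im (l2_inner a b)"
    using Re_eq[OF a l2_cmult[OF b, of \<i>]]
      l2_inner_cmult_right[OF l2_seq_conv[OF iso b] l2_seq_conv[OF iso a], of \<i>]
      l2_inner_cmult_right[OF b a, of \<i>]
    by (simp add: seq_conv_cmult)
  then show ?thesis
    using Re_eq[OF a b] by (simp add: complex_eq_iff)
qed

lemma seq_conv_delta0: "seq_conv \<gamma> delta0 = \<gamma>"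
  by (simp add: fun_eq_iff seq_conv_def delta0_def if_distrib sum.delta cong: if_cong)

lemma seq_conv_0: "seq_conv \<gamma> a 0 = \<gamma> 0 * a 0"
  unfolding seq_conv_def by simp

lemma inner_function_sqnorm_decomposition:
  assumes g: "inner_function g" and A: "A \<in> H2"
  shows "l2_sqnorm (taylor_coeff (\<lambda>z. g z * A z + (cnj (g 0) * g z - 1))) =
           l2_sqnorm (taylor_coeff A) + l2_sqnorm (taylor_coeff (\<lambda>z. cnj (g 0) * g z - 1))"
proof -
  define \<gamma> a where "\<gamma> = taylor_coeff g" and "a = taylor_coeff A"
  define w where "w k = cnj (g 0) * \<gamma> k - delta0 k" for k
  have g0: "g analytic_on {0}" and A0: "A analytic_on {0}" and a: "l2 a"
    using g A unfolding inner_function_def a_def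
    by (auto simp: H2_iff_l2 analytic_at_0_if_holomorphic_on_unit_disc)
  have iso: "conv_isometric_on_polys \<gamma>"
    unfolding \<gamma>_def by (rule inner_function_conv_isometric_on_polys[OF g])
  have \<gamma>: "l2 \<gamma>"
    using l2_seq_conv[OF iso l2_delta0] by (simp add: seq_conv_delta0)
  have w: "taylor_coeff (\<lambda>z. cnj (g 0) * g z - 1) = w"
    unfolding w_def \<gamma>_def using g0
    by (auto simp: taylor_coeff_diff taylor_coeff_cmult taylor_coeff_const delta0_def analytic_intros)
  have l2_w: "l2 w"
    unfolding w_def using \<gamma> by (intro l2_diff l2_cmult l2_delta0)
  have "taylor_coeff (\<lambda>z. g z * A z + (cnj (g 0) * g z - 1)) = (\<lambda>k. seq_conv \<gamma> a k + w k)"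
    using g0 A0 w unfolding \<gamma>_def a_def
    by (auto simp: taylor_coeff_add taylor_coeff_mult analytic_intros)
  \<comment> \<open>By the isometry, <g A, g> = <A, 1> = A(0), while <g A, 1> = g(0) A(0).\<close>
  moreover have "l2_inner (seq_conv \<gamma> a) w = 0"
  proof -
    have "l2_inner (seq_conv \<gamma> a) \<gamma> = a 0"
      using l2_inner_seq_conv[OF iso a l2_delta0] l2_inner_delta0[OF a] by (simp add: seq_conv_delta0)
    moreover have "l2_inner (seq_conv \<gamma> a) delta0 = g 0 * a 0"
      using l2_inner_delta0[OF l2_seq_conv[OF iso a]] by (simp add: seq_conv_0 \<gamma>_def taylor_coeff_0)
    ultimately show ?thesis
      unfolding w_def using l2_seq_conv[OF iso a] \<gamma>
      by (simp add: l2_inner_diff_right l2_inner_cmult_right l2_cmult l2_delta0)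
  qed
  ultimately show ?thesis
    using l2_w l2_seq_conv[OF iso a] l2_sqnorm_seq_conv[OF iso a]
    by (simp add: w l2_sqnorm_add a_def)
qed

section \<open>Best approximation by polynomial multiples\<close>

lemma taylor_coeff_monom_mult:
  assumes "F analytic_on {0}"
  shows "taylor_coeff (\<lambda>z. z ^ i * F z) k = (if i \<le> k then taylor_coeff F (k - i) else 0)"
proof -
  have "taylor_coeff (\<lambda>z. z ^ i * F z) k = taylor_coeff (\<lambda>z. poly (monom 1 i) z * F z) k"
    by (simp add: poly_monom)
  also have "\<dots> = seq_conv (coeff (monom 1 i)) (taylor_coeff F) k"
    using assms by (simp add: taylor_coeff_mult taylor_coeff_poly analytic_intros)
  also have "\<dots> = (\<Sum>j\<le>k. (if j = i then taylor_coeff F (k - j) else 0))"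
    unfolding seq_conv_def by (intro sum.cong) (auto simp: coeff_monom)
  finally show ?thesis
    by simp
qed

lemma l2_taylor_coeff_monom_mult:
  assumes "F analytic_on {0}" "l2 (taylor_coeff F)"
  shows "l2 (taylor_coeff (\<lambda>z. z ^ i * F z))"
proof -
  have "summable (\<lambda>k. (norm (taylor_coeff (\<lambda>z. z ^ i * F z) (k + i)))\<^sup>2)"
    using assms by (simp add: taylor_coeff_monom_mult l2_def)
  then show ?thesis
    unfolding l2_def by (subst (asm) summable_iff_shift)
qed

lemma taylor_coeff_poly_mult:
  assumes F: "F analytic_on {0}" and q: "degree q \<le> n"
  shows "taylor_coeff (\<lambda>z. poly q z * F z) k = (\<Sum>i<Suc n. coeff q i * taylor_coeff (\<lambda>z. z ^ i * F z) k)"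
proof -
  have "poly q z = (\<Sum>i<Suc n. coeff q i * z ^ i)" for z
  proof -
    have "poly q z = (\<Sum>i\<le>degree q. coeff q i * z ^ i)"
      by (rule poly_altdef)
    also have "\<dots> = (\<Sum>i\<le>n. coeff q i * z ^ i)"
      using q by (intro sum.mono_neutral_left) (auto simp: coeff_eq_0)
    finally show ?thesis
      by (simp add: lessThan_Suc_atMost)
  qed
  then have "(\<lambda>z. poly q z * F z) = (\<lambda>z. \<Sum>i<Suc n. coeff q i * (z ^ i * F z))"
    by (simp only: sum_distrib_right mult.assoc)
  then have "taylor_coeff (\<lambda>z. poly q z * F z) k = taylor_coeff (\<lambda>z. \<Sum>i<Suc n. coeff q i * (z ^ i * F z)) k"
    by (rule arg_cong)
  also have "\<dots> = (\<Sum>i<Suc n. taylor_coeff (\<lambda>z. coeff q i * (z ^ i * F z)) k)"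
    using F by (intro taylor_coeff_sum analytic_intros) auto
  also have "\<dots> = (\<Sum>i<Suc n. coeff q i * taylor_coeff (\<lambda>z. z ^ i * F z) k)"
    using F by (intro sum.cong refl taylor_coeff_cmult analytic_intros)
  finally show ?thesis .
qed

lemma taylor_coeff_poly_mult_minus_const:
  assumes "F analytic_on {0}" "degree q \<le> n"
  shows "taylor_coeff (\<lambda>z. poly q z * F z - c) k =
           (\<Sum>i<Suc n. coeff q i * taylor_coeff (\<lambda>z. z ^ i * F z) k) - c * delta0 k"
  using assms
  by (simp add: taylor_coeff_diff taylor_coeff_poly_mult taylor_coeff_const delta0_def analytic_intros)

lemma H2_poly_mult_minus_const:
  assumes "F \<in> H2"
  shows "(\<lambda>z. poly q z * F z - c) \<in> H2"
proof -
  have F: "F holomorphic_on unit_disc" "F analytic_on {0}" "l2 (taylor_coeff F)"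
    using assms by (auto simp: H2_iff_l2 analytic_at_0_if_holomorphic_on_unit_disc)
  have "taylor_coeff (\<lambda>z. poly q z * F z - c) =
      (\<lambda>k. (\<Sum>i<Suc (degree q). coeff q i * taylor_coeff (\<lambda>z. z ^ i * F z) k) - c * delta0 k)"
    using taylor_coeff_poly_mult_minus_const[OF F(2) order.refl] by (rule ext)
  moreover have "l2 (\<lambda>k. (\<Sum>i<Suc (degree q). coeff q i * taylor_coeff (\<lambda>z. z ^ i * F z) k) - c * delta0 k)"
    using F by (intro l2_diff l2_lincomb l2_cmult l2_delta0 l2_taylor_coeff_monom_mult) auto
  ultimately show ?thesis
    using F by (simp add: H2_iff_l2 holomorphic_intros)
qed

lemma H2_norm_nonneg: "F \<in> H2 \<Longrightarrow> 0 \<le> H2_norm F"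
  by (simp add: H2_iff_l2 H2_norm_eq l2_sqnorm_nonneg)

lemma H2_norm_cmult:
  assumes "F \<in> H2"
  shows "H2_norm (\<lambda>z. c * F z) = norm c * H2_norm F"
proof -
  have "taylor_coeff (\<lambda>z. c * F z) = (\<lambda>k. c * taylor_coeff F k)"
    using assms by (intro ext taylor_coeff_cmult analytic_at_0_if_holomorphic_on_unit_disc)
      (simp add: H2_iff_l2)
  then show ?thesis
    using assms by (simp add: H2_iff_l2 H2_norm_eq l2_sqnorm_cmult real_sqrt_mult)
qed

lemma holomorphic_eq_0_if_taylor_coeff_eq_0:
  assumes "F holomorphic_on ball 0 R" "\<And>k. taylor_coeff F k = 0" "z \<in> ball 0 R"
  shows "F z = 0"
proof -
  have "(\<lambda>k. 0) sums F z"
    using taylor_coeff_sums[OF assms(1,3)] assms(2) by simp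
  then show ?thesis
    using sums_zero sums_unique2 by blast
qed

lemma poly_eq_0_if_mult_vanishes:
  fixes F :: "'a::{real_normed_field, perfect_space} \<Rightarrow> 'a"
  assumes F: "continuous_on S F" "open S" and z0: "z0 \<in> S" "F z0 \<noteq> 0"
    and vanishes: "\<And>z. z \<in> S \<Longrightarrow> poly p z * F z = 0"
  shows "p = 0"
proof (rule ccontr)
  assume "p \<noteq> 0"
  define U where "U = S \<inter> F -` (- {0})"
  have "open U"
    unfolding U_def using F by (intro continuous_open_preimage open_Compl closed_singleton)
  moreover have "U \<subseteq> {z. poly p z = 0}"
    using vanishes unfolding U_def by auto
  then have "finite U"
    using poly_roots_finite[OF \<open>p \<noteq> 0\<close>] finite_subset by blast
  ultimately have "U = {}"
    using finite_imp_not_open by blast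
  then show False
    using z0 unfolding U_def by auto
qed

lemma degree_trunc_poly_le: "degree (trunc_poly (Suc n) c) \<le> n"
  unfolding trunc_poly_def
  by (intro degree_sum_le) (auto intro: order.trans[OF degree_monom_le])

lemma H2_norm_poly_mult_minus_const:
  assumes "F analytic_on {0}" "degree q \<le> n"
  shows "H2_norm (\<lambda>z. poly q z * F z - c) =
           sqrt (l2_sqnorm (\<lambda>k. c * delta0 k - (\<Sum>i<Suc n. coeff q i * taylor_coeff (\<lambda>z. z ^ i * F z) k)))"
proof -
  have "taylor_coeff (\<lambda>z. poly q z * F z - c) =
      (\<lambda>k. (\<Sum>i<Suc n. coeff q i * taylor_coeff (\<lambda>z. z ^ i * F z) k) - c * delta0 k)"
    using taylor_coeff_poly_mult_minus_const[OF assms] by (rule ext)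
  then show ?thesis
    by (simp add: H2_norm_eq l2_sqnorm_diff_commute)
qed

definition best_poly_approx :: "nat \<Rightarrow> (complex \<Rightarrow> complex) \<Rightarrow> complex \<Rightarrow> complex poly \<Rightarrow> bool" where
  "best_poly_approx n F c q \<longleftrightarrow> degree q \<le> n \<and>
     (\<forall>p. degree p \<le> n \<longrightarrow> H2_norm (\<lambda>z. poly q z * F z - c) \<le> H2_norm (\<lambda>z. poly p z * F z - c))"

lemma is_Qn_iff_best_poly_approx: "is_Qn n F q \<longleftrightarrow> best_poly_approx n F 1 q"
  unfolding is_Qn_def best_poly_approx_def ..

lemma best_poly_approx_exists:
  assumes f: "f \<in> H2"
  shows "\<exists>q. best_poly_approx n f c q"
proof -
  have f0: "f analytic_on {0}" and "l2 (taylor_coeff f)"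
    using f by (auto simp: H2_iff_l2 analytic_at_0_if_holomorphic_on_unit_disc)
  define e where "e i = taylor_coeff (\<lambda>z. z ^ i * f z)" for i
  have e: "l2 (e i)" for i
    unfolding e_def by (rule l2_taylor_coeff_monom_mult) fact+
  have x: "l2 (\<lambda>k. c * delta0 k)"
    by (intro l2_cmult l2_delta0)
  obtain \<beta> where \<beta>: "\<forall>j<Suc n. l2_inner (\<lambda>k. c * delta0 k - (\<Sum>i<Suc n. \<beta> i * e i k)) (e j) = 0"
    using l2_orthogonal_projection_exists[where e = e and n = "Suc n", OF e x] by blast
  define q where "q = trunc_poly (Suc n) \<beta>"
  have deg_q: "degree q \<le> n"
    unfolding q_def by (rule degree_trunc_poly_le)
  have norm_eq: "H2_norm (\<lambda>z. poly p z * f z - c) =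
      sqrt (l2_sqnorm (\<lambda>k. c * delta0 k - (\<Sum>i<Suc n. coeff p i * e i k)))" if "degree p \<le> n" for p
    unfolding e_def by (rule H2_norm_poly_mult_minus_const[OF f0 that])
  have coeff_q: "(\<lambda>k. c * delta0 k - (\<Sum>i<Suc n. coeff q i * e i k)) =
      (\<lambda>k. c * delta0 k - (\<Sum>i<Suc n. \<beta> i * e i k))"
    unfolding q_def coeff_trunc_poly by simp
  have "H2_norm (\<lambda>z. poly q z * f z - c) \<le> H2_norm (\<lambda>z. poly p z * f z - c)"
    if "degree p \<le> n" for p
    unfolding norm_eq[OF deg_q] norm_eq[OF that] real_sqrt_le_iff coeff_q
    by (rule l2_orthogonal_projection_minimal[where e = e, OF e x \<beta>])
  then show ?thesis
    unfolding best_poly_approx_def using deg_q by blast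
qed

lemma best_poly_approx_diff_mult_eq_0:
  assumes f: "f \<in> H2" and q1: "best_poly_approx n f c q1" and q2: "best_poly_approx n f c q2"
  shows "taylor_coeff (\<lambda>z. poly (q1 - q2) z * f z) k = 0"
proof -
  define A where "A q = (\<lambda>z. poly q z * f z - c)" for q
  define E where "E q = l2_sqnorm (taylor_coeff (A q))" for q
  have A: "A q analytic_on {0}" "l2 (taylor_coeff (A q))" for q
    unfolding A_def using H2_poly_mult_minus_const[OF f]
    by (auto simp: H2_iff_l2 analytic_at_0_if_holomorphic_on_unit_disc)
  have min: "E q \<le> E p" if "best_poly_approx n f c q" "degree p \<le> n" for q p
    using that unfolding best_poly_approx_def E_def A_def by (simp add: H2_norm_eq)
  have deg: "degree q1 \<le> n" "degree q2 \<le> n"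
    using q1 q2 unfolding best_poly_approx_def by auto
  define a1 a2 where "a1 = taylor_coeff (A q1)" and "a2 = taylor_coeff (A q2)"
  have a: "l2 a1" "l2 a2"
    unfolding a1_def a2_def by (fact A)+
  \<comment> \<open>Parallelogram law: the midpoint of two minimisers would be strictly better unless
    their errors coincide.\<close>
  have mid: "A (smult (1/2) (q1 + q2)) = (\<lambda>z. (1/2) * (A q1 z + A q2 z))"
    unfolding A_def by (simp add: fun_eq_iff algebra_simps)
  have "taylor_coeff (A (smult (1/2) (q1 + q2))) = (\<lambda>k. (1/2) * (a1 k + a2 k))"
    using taylor_coeff_cmult[OF analytic_on_add[OF A(1)[of q1] A(1)[of q2]], of "1/2"]
      taylor_coeff_add[OF A(1)[of q1] A(1)[of q2]]
    unfolding mid a1_def a2_def by (intro ext) simp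
  then have E_mid: "E (smult (1/2) (q1 + q2)) = l2_sqnorm (\<lambda>k. a1 k + a2 k) / 4"
    unfolding E_def using l2_sqnorm_cmult[OF l2_add[OF a], of "1/2"] by (simp add: power2_eq_square)
  have "degree (smult (1/2) (q1 + q2)) \<le> n"
    using deg by (simp add: degree_add_le)
  then have "E q1 \<le> E (smult (1/2) (q1 + q2))" "E q1 \<le> E q2" "E q2 \<le> E q1"
    using min[OF q1] min[OF q2] deg by blast+
  then have "l2_sqnorm (\<lambda>k. a1 k - a2 k) \<le> 0"
    using l2_parallelogram[OF a] E_mid unfolding E_def a1_def a2_def by linarith
  then have "a1 k - a2 k = 0"
    using l2_sqnorm_nonneg[OF l2_diff[OF a]] l2_sqnorm_eq_0_iff[OF l2_diff[OF a]] by simp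
  moreover have "(\<lambda>z. poly (q1 - q2) z * f z) = (\<lambda>z. A q1 z - A q2 z)"
    unfolding A_def by (simp add: fun_eq_iff algebra_simps)
  ultimately show ?thesis
    unfolding a1_def a2_def by (simp add: taylor_coeff_diff A)
qed

lemma poly_eq_0_if_taylor_coeff_mult_eq_0:
  assumes f: "f \<in> H2_star" and tc_0: "\<And>k. taylor_coeff (\<lambda>z. poly p z * f z) k = 0"
  shows "p = 0"
proof -
  have f_hol: "f holomorphic_on unit_disc" and "\<exists>z\<in>unit_disc. f z \<noteq> 0"
    using f unfolding H2_star_def H2_def by auto
  then obtain z0 where z0: "z0 \<in> unit_disc" "f z0 \<noteq> 0"
    by blast
  have "(\<lambda>z. poly p z * f z) holomorphic_on unit_disc"
    using f_hol by (intro holomorphic_intros)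
  then have "poly p z * f z = 0" if "z \<in> unit_disc" for z
    using holomorphic_eq_0_if_taylor_coeff_eq_0 tc_0 that by blast
  then show ?thesis
    using poly_eq_0_if_mult_vanishes[OF holomorphic_on_imp_continuous_on[OF f_hol] open_ball z0]
    by blast
qed

lemma best_poly_approx_unique:
  assumes f: "f \<in> H2_star" and "best_poly_approx n f c q1" "best_poly_approx n f c q2"
  shows "q1 = q2"
proof -
  have "f \<in> H2"
    using f unfolding H2_star_def by simp
  then have "q1 - q2 = 0"
    using assms by (intro poly_eq_0_if_taylor_coeff_mult_eq_0 best_poly_approx_diff_mult_eq_0)
  then show ?thesis
    by simp
qed

lemma best_poly_approx_0_0:
  assumes "f \<in> H2"
  shows "best_poly_approx n f 0 0"
proof -
  have "H2_norm (\<lambda>z. 0) = 0"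
    by (simp add: H2_norm_eq taylor_coeff_const l2_sqnorm_def)
  then show ?thesis
    using H2_norm_nonneg[OF H2_poly_mult_minus_const[OF assms, where c = 0]]
    unfolding best_poly_approx_def by simp
qed

lemma best_poly_approx_smult:
  assumes f: "f \<in> H2" and c: "c \<noteq> 0" and Q: "best_poly_approx n f 1 Q"
  shows "best_poly_approx n f c (smult c Q)"
proof -
  have scale: "H2_norm (\<lambda>z. poly p z * f z - c) = norm c * H2_norm (\<lambda>z. poly (smult (1/c) p) z * f z - 1)"
    for p
  proof -
    have "(\<lambda>z. poly p z * f z - c) = (\<lambda>z. c * (poly (smult (1/c) p) z * f z - 1))"
      using c by (simp add: fun_eq_iff algebra_simps)
    then show ?thesis
      by (simp only: H2_norm_cmult[OF H2_poly_mult_minus_const[OF f]])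
  qed
  have scale_Q: "H2_norm (\<lambda>z. poly (smult c Q) z * f z - c) = norm c * H2_norm (\<lambda>z. poly Q z * f z - 1)"
    using scale[of "smult c Q"] c by (simp add: smult_smult)
  show ?thesis
    unfolding best_poly_approx_def
  proof (intro conjI allI impI)
    show "degree (smult c Q) \<le> n"
      using Q unfolding best_poly_approx_def by simp
    fix p :: "complex poly"
    assume "degree p \<le> n"
    then have "degree (smult (1/c) p) \<le> n"
      by simp
    then have "H2_norm (\<lambda>z. poly Q z * f z - 1) \<le> H2_norm (\<lambda>z. poly (smult (1/c) p) z * f z - 1)"
      using Q unfolding best_poly_approx_def by blast
    then show "H2_norm (\<lambda>z. poly (smult c Q) z * f z - c) \<le> H2_norm (\<lambda>z. poly p z * f z - c)"
      unfolding scale_Q scale[of p] by (rule mult_left_mono) simp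
  qed
qed

lemma best_poly_approx_iff_eq_smult_Qn:
  assumes f: "f \<in> H2_star"
  shows "best_poly_approx n f c q \<longleftrightarrow> q = smult c (Qn n f)"
proof -
  have fH2: "f \<in> H2"
    using f unfolding H2_star_def by simp
  have unique: "\<exists>!q. best_poly_approx n f c q" for c
    using best_poly_approx_exists[OF fH2] best_poly_approx_unique[OF f] by blast
  have "best_poly_approx n f 1 (Qn n f)"
    using theI'[OF unique[of 1]] unfolding Qn_def is_Qn_iff_best_poly_approx .
  then have "best_poly_approx n f c (smult c (Qn n f))"
    using best_poly_approx_0_0[OF fH2] best_poly_approx_smult[OF fH2]
    by (cases "c = 0") simp_all
  then show ?thesis
    using unique by blast
qed

theorem proposition2p2:
  fixes f g :: "complex \<Rightarrow> complex" and n :: nat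
  assumes "inner_function g" and "f \<in> H2_star"
  shows "Qn n (\<lambda>z. f z * g z) = smult (cnj (g 0)) (Qn n f)"
proof -
  define c where "c = cnj (g 0)"
  have fH2: "f \<in> H2"
    using assms(2) unfolding H2_star_def by simp
  define E where "E q = l2_sqnorm (taylor_coeff (\<lambda>z. poly q z * f z - c))" for q
  have "(\<lambda>z. poly q z * (f z * g z) - 1) = (\<lambda>z. g z * (poly q z * f z - c) + (c * g z - 1))" for q
    by (simp add: fun_eq_iff algebra_simps)
  then have "H2_norm (\<lambda>z. poly q z * (f z * g z) - 1) =
      sqrt (E q + l2_sqnorm (taylor_coeff (\<lambda>z. c * g z - 1)))" for q
    using inner_function_sqnorm_decomposition[OF assms(1) H2_poly_mult_minus_const[OF fH2]]
    unfolding E_def c_def by (simp add: H2_norm_eq)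
  moreover have "H2_norm (\<lambda>z. poly q z * f z - c) = sqrt (E q)" for q
    unfolding E_def by (rule H2_norm_eq)
  ultimately have "is_Qn n (\<lambda>z. f z * g z) q \<longleftrightarrow> best_poly_approx n f c q" for q
    unfolding is_Qn_def best_poly_approx_def by simp
  then have "is_Qn n (\<lambda>z. f z * g z) = (\<lambda>q. q = smult c (Qn n f))"
    using best_poly_approx_iff_eq_smult_Qn[OF assms(2)] by blast
  then show ?thesis
    unfolding Qn_def[of n "\<lambda>z. f z * g z"] c_def by simp
qed

end
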